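(* A Heyting algebra $\boldsymbol{A}$ validates a Sahlqvist quasiequation $\Phi$ if and only if it validates every formula in $\mathsf{A}(\Phi)$.
   Context: Formulas over variables with $\land,\lor,\to,\lnot,0,1$; a formula $\varphi$ is valid in a Heyting algebra if it satisfies $\varphi\approx1$. A variable occurrence is positive (negative) if the number of negations and implication antecedents in whose scope it lies is even (odd); positive/negative formulas have all occurrences so. Sahlqvist antecedent: built from variables, negative formulas, $0,1$ by $\land,\lor$. Sahlqvist implication: positive formula, or $\lnot\varphi$ with $\varphi$ a Sahlqvist antecedent, or $\varphi\to\psi$ with $\varphi$ a Sahlqvist antecedent and $\psi$ positive. A Sahlqvist quasiequation is $\Phi=\varphi_1\land y\le z\,\&\cdots\&\,\varphi_m\land y\le z\Longrightarrow y\le z$ (universally quantified), $y,z$ distinct variables not in the $\varphi_i$, each $\varphi_i$ built from Sahlqvist implications by $\land,\lor$, $a\le b$ meaning $a\land b\approx a$. For each formula $\varphi(x_1..x_n)$ and $k\ge1$, $\boldsymbol{\varphi}^k$ is the finite set of formulas: $\boldsymbol{x_m}^k=\{x_m^1..x_m^k\}$; $\boldsymbol{1}^k=\{x_1^1\to x_1^1\}$; $\boldsymbol{0}^k=\{x_1^1,x_1^1\to0\}$; $(\boldsymbol{\psi\land\chi})^k=\boldsymbol{\psi}^k\cup\boldsymbol{\chi}^k$; with $\boldsymbol{\psi}^k=\{\psi_1..\psi_p\}$, $\boldsymbol{\chi}^k=\{\chi_1..\chi_t\}$: $(\boldsymbol{\lnot\psi})^k=\{\psi_1\to(\cdots(\psi_p\to0)\cdots)\}$,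 $(\boldsymbol{\psi\to\chi})^k=\{\psi_1\to(\cdots(\psi_p\to\chi_j)\cdots):j\le t\}$, $(\boldsymbol{\psi\lor\chi})^k=\{\psi_i\lor\chi_j:i\le p,j\le t\}$. For finite $\Gamma=\{\gamma_1..\gamma_n\}$, $\Gamma\to\varphi$ denotes $\{\gamma_1\to(\cdots(\gamma_n\to\varphi)\cdots)\}$. $\mathsf{A}(\Phi)=\bigcup_{k\ge1}\big(((\boldsymbol{\varphi_1}^k\to y)\cup\cdots\cup(\boldsymbol{\varphi_m}^k\to y))\to y\big)$, $y$ a variable not occurring in the $\boldsymbol{\varphi_i}^k$. *)

theory Defs
  imports Main
begin

class heyting_algebra = bounded_lattice +
  fixes himp :: "'a \<Rightarrow> 'a \<Rightarrow> 'a"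
  assumes himp_residuation: "inf x y \<le> z \<longleftrightarrow> x \<le> himp y z"

datatype 'v form =
    Var 'v
  | FAnd "'v form" "'v form"
  | FOr "'v form" "'v form"
  | FImp "'v form" "'v form"
  | FNot "'v form"
  | FBot
  | FTop

primrec eval :: "('v \<Rightarrow> 'a::heyting_algebra) \<Rightarrow> 'v form \<Rightarrow> 'a" where
  "eval v (Var x) = v x"
| "eval v (FAnd a b) = inf (eval v a) (eval v b)"
| "eval v (FOr a b) = sup (eval v a) (eval v b)"
| "eval v (FImp a b) = himp (eval v a) (eval v b)"
| "eval v (FNot a) = himp (eval v a) bot"
| "eval v FBot = bot"
| "eval v FTop = top"

definition valid_in :: "'a::heyting_algebra itself \<Rightarrow> 'v form \<Rightarrow> bool" where
  "valid_in TYPE('a) \<phi> \<longleftrightarrow> (\<forall>v :: 'v \<Rightarrow> 'a. eval v \<phi> = top)"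

text \<open>occs p \<phi>: variables having an occurrence in \<phi> of polarity p
  (True = positive, i.e. in the scope of an even number of negations and
  implication antecedents; False = negative).\<close>
primrec occs :: "bool \<Rightarrow> 'v form \<Rightarrow> 'v set" where
  "occs p (Var x) = (if p then {x} else {})"
| "occs p (FAnd a b) = occs p a \<union> occs p b"
| "occs p (FOr a b) = occs p a \<union> occs p b"
| "occs p (FImp a b) = occs (\<not> p) a \<union> occs p b"
| "occs p (FNot a) = occs (\<not> p) a"
| "occs p FBot = {}"
| "occs p FTop = {}"

definition positive_form :: "'v form \<Rightarrow> bool" where
  "positive_form \<phi> \<longleftrightarrow> occs False \<phi> = {}"

definition negative_form :: "'v form \<Rightarrow> bool" where
  "negative_form \<phi> \<longleftrightarrow> occs True \<phi> = {}"

primrec vars :: "'v form \<Rightarrow> 'v set" where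
  "vars (Var x) = {x}"
| "vars (FAnd a b) = vars a \<union> vars b"
| "vars (FOr a b) = vars a \<union> vars b"
| "vars (FImp a b) = vars a \<union> vars b"
| "vars (FNot a) = vars a"
| "vars FBot = {}"
| "vars FTop = {}"

inductive sahlqvist_antecedent :: "'v form \<Rightarrow> bool" where
  sa_var: "sahlqvist_antecedent (Var x)"
| sa_neg: "negative_form \<phi> \<Longrightarrow> sahlqvist_antecedent \<phi>"
| sa_bot: "sahlqvist_antecedent FBot"
| sa_top: "sahlqvist_antecedent FTop"
| sa_and: "sahlqvist_antecedent a \<Longrightarrow> sahlqvist_antecedent b \<Longrightarrow> sahlqvist_antecedent (FAnd a b)"
| sa_or: "sahlqvist_antecedent a \<Longrightarrow> sahlqvist_antecedent b \<Longrightarrow> sahlqvist_antecedent (FOr a b)"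

inductive sahlqvist_implication :: "'v form \<Rightarrow> bool" where
  si_pos: "positive_form \<phi> \<Longrightarrow> sahlqvist_implication \<phi>"
| si_not: "sahlqvist_antecedent \<phi> \<Longrightarrow> sahlqvist_implication (FNot \<phi>)"
| si_imp: "sahlqvist_antecedent \<phi> \<Longrightarrow> positive_form \<psi> \<Longrightarrow> sahlqvist_implication (FImp \<phi> \<psi>)"

inductive sahlqvist_premise :: "'v form \<Rightarrow> bool" where
  sp_base: "sahlqvist_implication \<phi> \<Longrightarrow> sahlqvist_premise \<phi>"
| sp_and: "sahlqvist_premise a \<Longrightarrow> sahlqvist_premise b \<Longrightarrow> sahlqvist_premise (FAnd a b)"
| sp_or: "sahlqvist_premise a \<Longrightarrow> sahlqvist_premise b \<Longrightarrow> sahlqvist_premise (FOr a b)"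

text \<open>The quasiequation
  \<phi>_1 \<and> y \<le> z & ... & \<phi>_m \<and> y \<le> z \<Longrightarrow> y \<le> z
  is represented by the list [\<phi>_1,...,\<phi>_m] together with the variables y, z.\<close>
definition sahlqvist_quasiequation :: "nat form list \<Rightarrow> nat \<Rightarrow> nat \<Rightarrow> bool" where
  "sahlqvist_quasiequation \<phi>s y z \<longleftrightarrow>
     \<phi>s \<noteq> [] \<and> y \<noteq> z \<and>
     (\<forall>\<phi>\<in>set \<phi>s. sahlqvist_premise \<phi> \<and> y \<notin> vars \<phi> \<and> z \<notin> vars \<phi>)"

definition quasi_valid_in :: "'a::heyting_algebra itself \<Rightarrow> nat form list \<Rightarrow> nat \<Rightarrow> nat \<Rightarrow> bool" where
  "quasi_valid_in TYPE('a) \<phi>s y z \<longleftrightarrow>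
     (\<forall>v :: nat \<Rightarrow> 'a.
        (\<forall>\<phi>\<in>set \<phi>s. inf (eval v \<phi>) (v y) \<le> v z) \<longrightarrow> v y \<le> v z)"

definition imps :: "'v form list \<Rightarrow> 'v form \<Rightarrow> 'v form" where
  "imps \<Gamma> \<phi> = foldr FImp \<Gamma> \<phi>"

text \<open>Variable x_m^j is represented as Var (m, j).\<close>
primrec bold :: "nat \<Rightarrow> nat form \<Rightarrow> (nat \<times> nat) form list" where
  "bold k (Var m) = map (\<lambda>j. Var (m, j)) [1..<Suc k]"
| "bold k FTop = [FImp (Var (1,1)) (Var (1,1))]"
| "bold k FBot = [Var (1,1), FImp (Var (1,1)) FBot]"
| "bold k (FAnd a b) = bold k a @ bold k b"
| "bold k (FNot a) = [imps (bold k a) FBot]"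
| "bold k (FImp a b) = map (\<lambda>c. imps (bold k a) c) (bold k b)"
| "bold k (FOr a b) = [FOr c d. c \<leftarrow> bold k a, d \<leftarrow> bold k b]"

text \<open>A(\<Phi>); the variables x_m^j become Some (m,j), the fresh variable y is None.\<close>
definition A_set :: "nat form list \<Rightarrow> (nat \<times> nat) option form set" where
  "A_set \<phi>s = (\<Union>k\<in>{1..}.
     {imps (map (\<lambda>\<phi>. imps (map (map_form Some) (bold k \<phi>)) (Var None)) \<phi>s) (Var None)})"

end

theory Submission
  imports Defs
begin

(* The meet of the formulas in bold-phi^k evaluates to phi at the valuation
   x_m := x_m^1 /\ ... /\ x_m^k: the product construction for \/ is distributivity, and
   the one for -> holds because a -> _ preserves meets.  So the k-th member of A(Phi)
   is valid iff (phi_1 -> d) /\ ... /\ (phi_m -> d) <= d for all valuations and all d,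
   independently of k.  By residuation this is the quasiequation: put y := that meet
   and z := d, or conversely d := y -> z. *)

lemma (in order) eq_by_lower_bounds:
  assumes "\<And>x. x \<le> a \<longleftrightarrow> x \<le> b"
  shows "a = b"
  using assms[of a] assms[of b] by (simp add: antisym)

context heyting_algebra
begin

lemma inf_himp_le: "inf (himp x y) x \<le> y"
  by (simp add: himp_residuation)

lemma inf_himp_bot: "inf x (himp x bot) = bot"
  using inf_himp_le[of x bot] by (simp add: inf_commute bot_unique)

lemma himp_eq_top_iff: "himp x y = top \<longleftrightarrow> x \<le> y"
  using himp_residuation[of top x y] by (simp add: top_unique)

lemma himp_refl: "himp x x = top"
  by (simp add: himp_eq_top_iff)

lemma himp_top: "himp x top = top"
  by (simp add: himp_eq_top_iff)

lemma top_himp: "himp top x = x"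
  by (rule eq_by_lower_bounds) (simp add: himp_residuation[symmetric])

lemma himp_himp: "himp x (himp y z) = himp (inf x y) z"
  by (rule eq_by_lower_bounds) (simp add: himp_residuation[symmetric] inf_assoc)

lemma himp_inf: "himp x (inf y z) = inf (himp x y) (himp x z)"
  by (rule eq_by_lower_bounds) (simp add: himp_residuation[symmetric])

lemma heyting_inf_sup_distrib: "inf x (sup y z) = sup (inf x y) (inf x z)"
proof (rule order.antisym)
  have "y \<le> himp x (sup (inf x y) (inf x z))" and "z \<le> himp x (sup (inf x y) (inf x z))"
    by (simp_all add: himp_residuation[symmetric] inf_commute)
  then have "sup y z \<le> himp x (sup (inf x y) (inf x z))"
    by simp
  then show "inf x (sup y z) \<le> sup (inf x y) (inf x z)"
    by (simp add: himp_residuation[symmetric] inf_commute)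
qed (simp add: le_infI2)

end

subclass (in heyting_algebra) distrib_lattice
proof
  fix x y z :: 'a
  have "inf (sup x y) (sup x z) = sup (inf (sup x y) x) (inf (sup x y) z)"
    by (rule heyting_inf_sup_distrib)
  also have "\<dots> = sup x (inf z (sup x y))"
    by (simp add: inf_commute inf_absorb2)
  also have "\<dots> = sup x (sup (inf z x) (inf z y))"
    by (simp add: heyting_inf_sup_distrib)
  also have "\<dots> = sup x (inf y z)"
    by (metis inf_commute inf_le2 sup_absorb1 sup_assoc sup_commute)
  finally show "sup x (inf y z) = inf (sup x y) (sup x z)"
    by simp
qed

definition meet_list :: "'a::bounded_lattice list \<Rightarrow> 'a" where
  "meet_list xs = foldr inf xs top"

lemma meet_list_Nil [simp]: "meet_list [] = top"
  by (simp add: meet_list_def)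

lemma meet_list_Cons [simp]: "meet_list (x # xs) = inf x (meet_list xs)"
  by (simp add: meet_list_def)

lemma meet_list_append [simp]: "meet_list (xs @ ys) = inf (meet_list xs) (meet_list ys)"
  by (induction xs) (simp_all add: inf_assoc)

lemma le_meet_list_iff: "x \<le> meet_list xs \<longleftrightarrow> (\<forall>a\<in>set xs. x \<le> a)"
  by (induction xs) auto

lemma meet_list_le: "x \<in> set xs \<Longrightarrow> meet_list xs \<le> x"
  using le_meet_list_iff[of "meet_list xs" xs] by simp

lemma meet_list_replicate_Suc [simp]: "meet_list (replicate (Suc n) x) = x"
  by (induction n) simp_all

lemma meet_list_sup_left:
  fixes a :: "'a::{distrib_lattice, bounded_lattice}"
  shows "meet_list (map (\<lambda>b. sup a (f b)) xs) = sup a (meet_list (map f xs))"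
  by (induction xs) (simp_all add: sup_inf_distrib1)

lemma meet_list_sup_product:
  fixes f g :: "'b \<Rightarrow> 'a::{distrib_lattice, bounded_lattice}"
  shows "meet_list [sup (f a) (g b). a \<leftarrow> xs, b \<leftarrow> ys] =
         sup (meet_list (map f xs)) (meet_list (map g ys))"
  by (induction xs) (simp_all add: meet_list_sup_left sup_inf_distrib2)

lemma meet_list_himp_right:
  fixes a :: "'a::heyting_algebra"
  shows "meet_list (map (\<lambda>b. himp a (f b)) xs) = himp a (meet_list (map f xs))"
  by (induction xs) (simp_all add: himp_top himp_inf)

lemma eval_imps: "eval v (imps \<Gamma> \<phi>) = himp (meet_list (map (eval v) \<Gamma>)) (eval v \<phi>)"
  by (induction \<Gamma>) (simp_all add: imps_def top_himp himp_himp)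

lemma eval_map_form: "eval v (map_form f \<phi>) = eval (v \<circ> f) \<phi>"
  by (induction \<phi>) simp_all

lemma eval_cong: "(\<And>x. x \<in> vars \<phi> \<Longrightarrow> v x = v' x) \<Longrightarrow> eval v \<phi> = eval v' \<phi>"
  by (induction \<phi>) auto

definition meet_copies :: "nat \<Rightarrow> (nat \<times> nat \<Rightarrow> 'a::bounded_lattice) \<Rightarrow> nat \<Rightarrow> 'a" where
  "meet_copies k w m = meet_list (map (\<lambda>j. w (m, j)) [1..<Suc k])"

lemma meet_copies_const: "k > 0 \<Longrightarrow> meet_copies k (\<lambda>(m, j). v m) = v"
  by (auto simp: meet_copies_def fun_eq_iff map_replicate_const gr0_conv_Suc
      simp del: replicate_Suc)

lemma eval_bold: "meet_list (map (eval w) (bold k \<phi>)) = eval (meet_copies k w) \<phi>"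
proof (induction \<phi>)
  case (FOr a b)
  then show ?case
    by (simp add: map_concat o_def meet_list_sup_product[of "eval w" "eval w", simplified o_def])
next
  case (FImp a b)
  then show ?case
    by (simp add: eval_imps o_def meet_list_himp_right[of _ "eval w", simplified o_def])
qed (simp_all add: meet_copies_def o_def eval_imps inf_himp_bot himp_refl)

definition meet_himp_valid_in :: "'a::heyting_algebra itself \<Rightarrow> nat form list \<Rightarrow> bool" where
  "meet_himp_valid_in TYPE('a) \<phi>s \<longleftrightarrow>
     (\<forall>(v :: nat \<Rightarrow> 'a) d. meet_list (map (\<lambda>\<phi>. himp (eval v \<phi>) d) \<phi>s) \<le> d)"

lemma quasi_valid_in_iff_meet_himp_valid_in:
  assumes "y \<noteq> z" and fresh: "\<forall>\<phi>\<in>set \<phi>s. y \<notin> vars \<phi> \<and> z \<notin> vars \<phi>"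
  shows "quasi_valid_in TYPE('a::heyting_algebra) \<phi>s y z \<longleftrightarrow> meet_himp_valid_in TYPE('a) \<phi>s"
  unfolding quasi_valid_in_def meet_himp_valid_in_def
proof (intro iffI allI impI)
  fix v :: "nat \<Rightarrow> 'a" and d :: 'a
  assume quasi: "\<forall>v :: nat \<Rightarrow> 'a. (\<forall>\<phi>\<in>set \<phi>s. inf (eval v \<phi>) (v y) \<le> v z) \<longrightarrow> v y \<le> v z"
  define c where "c = meet_list (map (\<lambda>\<phi>. himp (eval v \<phi>) d) \<phi>s)"
  define v' where "v' = v(y := c, z := d)"
  have "inf (eval v' \<phi>) (v' y) \<le> v' z" if "\<phi> \<in> set \<phi>s" for \<phi>
  proof -
    have "eval v' \<phi> = eval v \<phi>"
      using fresh that by (intro eval_cong) (auto simp: v'_def)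
    moreover have "c \<le> himp (eval v \<phi>) d"
      using that by (simp add: c_def meet_list_le)
    ultimately show ?thesis
      using \<open>y \<noteq> z\<close> by (simp add: v'_def inf_commute himp_residuation)
  qed
  with quasi have "v' y \<le> v' z"
    by blast
  with \<open>y \<noteq> z\<close> show "c \<le> d"
    by (simp add: v'_def)
next
  fix v :: "nat \<Rightarrow> 'a"
  assume "\<forall>(v :: nat \<Rightarrow> 'a) d. meet_list (map (\<lambda>\<phi>. himp (eval v \<phi>) d) \<phi>s) \<le> d"
    and hyps: "\<forall>\<phi>\<in>set \<phi>s. inf (eval v \<phi>) (v y) \<le> v z"
  moreover have "v y \<le> meet_list (map (\<lambda>\<phi>. himp (eval v \<phi>) (v z)) \<phi>s)"
    using hyps by (simp add: le_meet_list_iff inf_commute himp_residuation[symmetric])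
  ultimately show "v y \<le> v z"
    using order_trans by blast
qed

definition A_form :: "nat form list \<Rightarrow> nat \<Rightarrow> (nat \<times> nat) option form" where
  "A_form \<phi>s k = imps (map (\<lambda>\<phi>. imps (map (map_form Some) (bold k \<phi>)) (Var None)) \<phi>s) (Var None)"

lemma A_set_eq_image: "A_set \<phi>s = A_form \<phi>s ` {1..}"
  by (auto simp: A_set_def A_form_def)

lemma eval_A_form:
  "eval w (A_form \<phi>s k) =
   himp (meet_list (map (\<lambda>\<phi>. himp (eval (meet_copies k (\<lambda>x. w (Some x))) \<phi>) (w None)) \<phi>s)) (w None)"
  by (simp add: A_form_def eval_imps eval_map_form o_def eval_bold[of "\<lambda>x. w (Some x)", symmetric])

lemma valid_A_form_iff_meet_himp_valid_in:
  assumes "k > 0"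
  shows "valid_in TYPE('a::heyting_algebra) (A_form \<phi>s k) \<longleftrightarrow> meet_himp_valid_in TYPE('a) \<phi>s"
  unfolding valid_in_def meet_himp_valid_in_def eval_A_form himp_eq_top_iff
proof (intro iffI allI)
  fix v :: "nat \<Rightarrow> 'a" and d :: 'a
  assume valid: "\<forall>w :: (nat \<times> nat) option \<Rightarrow> 'a.
    meet_list (map (\<lambda>\<phi>. himp (eval (meet_copies k (\<lambda>x. w (Some x))) \<phi>) (w None)) \<phi>s) \<le> w None"
  define w :: "(nat \<times> nat) option \<Rightarrow> 'a" where "w = case_option d (\<lambda>(m, j). v m)"
  have "meet_copies k (\<lambda>x. w (Some x)) = v"
    using meet_copies_const[OF assms] by (simp add: w_def case_prod_beta')
  with valid[rule_format, of w] show "meet_list (map (\<lambda>\<phi>. himp (eval v \<phi>) d) \<phi>s) \<le> d"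
    by (simp add: w_def)
qed simp

theorem proposition9p5:
  fixes \<phi>s :: "nat form list" and y z :: nat
  assumes "sahlqvist_quasiequation \<phi>s y z"
  shows "quasi_valid_in TYPE('a::heyting_algebra) \<phi>s y z \<longleftrightarrow>
         (\<forall>\<psi>\<in>A_set \<phi>s. valid_in TYPE('a) \<psi>)"
proof -
  from assms have "y \<noteq> z" and "\<forall>\<phi>\<in>set \<phi>s. y \<notin> vars \<phi> \<and> z \<notin> vars \<phi>"
    by (auto simp: sahlqvist_quasiequation_def)
  then have "quasi_valid_in TYPE('a) \<phi>s y z \<longleftrightarrow> meet_himp_valid_in TYPE('a) \<phi>s"
    by (rule quasi_valid_in_iff_meet_himp_valid_in)
  also have "\<dots> \<longleftrightarrow> (\<forall>k\<in>{1..}. valid_in TYPE('a) (A_form \<phi>s k))"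
    by (auto simp: valid_A_form_iff_meet_himp_valid_in)
  also have "\<dots> \<longleftrightarrow> (\<forall>\<psi>\<in>A_set \<phi>s. valid_in TYPE('a) \<psi>)"
    by (simp add: A_set_eq_image)
  finally show ?thesis .
qed

end
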